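(* Let $\Omega=\{\Omega_1,\dots,\Omega_N\}$ be a finite set of points with distance function $d$, let $1\le n<N$, and let $r\in\{1,\dots,n\}$. Define, for $t\in\{1,\dots,n\}$, $f(t)=\max\big(d(\Omega_{n+1},\Omega_t),\ MMJ(\Omega_t,\Omega_r~|~\Omega_{[1,n]})\big)$, and $\mathbb{X}=\{f(t): t\in\{1,\dots,n\}\}$. Then $MMJ(\Omega_{n+1},\Omega_r~|~\Omega_{[1,n+1]})=\min(\mathbb{X})$.
   Context: $\Omega$ is a finite set of points indexed $\Omega_1,\dots,\Omega_N$, and $\Omega_{[1,n]}=\{\Omega_1,\dots,\Omega_n\}$. $d:\Omega\times\Omega\to[0,\infty)$ is a distance function (e.g. Euclidean distance), symmetric with $d(x,x)=0$. For a subset $S\subseteq\Omega$, a path from $i$ to $j$ in $S$ is a finite sequence of points of $S$ (at least two) starting at $i$ and ending at $j$, with no repeated points except that start and end may coincide when $i=j$. A jump of a path is the distance $d(x,y)$ between two consecutive points $x,y$, and $max\_jump$ of a path is its largest jump. The Min-Max-Jump distance with context $S$ is $MMJ(i,j~|~S)=\min\{max\_jump(\epsilon): \epsilon \text{ a path from } i \text{ to } j \text{ in } S\}$ for $i,j\in S$, with $MMJ(i,i~|~S)=0$. *)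

theory Defs
  imports "HOL-Analysis.Analysis"
begin

definition is_path :: "'a set \<Rightarrow> 'a \<Rightarrow> 'a \<Rightarrow> 'a list \<Rightarrow> bool" where
  "is_path S i j p \<longleftrightarrow> length p \<ge> 2 \<and> set p \<subseteq> S \<and> hd p = i \<and> last p = j \<and>
     (distinct p \<or> (i = j \<and> distinct (tl p)))"

definition max_jump :: "('a \<Rightarrow> 'a \<Rightarrow> real) \<Rightarrow> 'a list \<Rightarrow> real" where
  "max_jump d p = Max (set (map (\<lambda>k. d (p ! k) (p ! Suc k)) [0..<length p - 1]))"

definition MMJ :: "('a \<Rightarrow> 'a \<Rightarrow> real) \<Rightarrow> 'a \<Rightarrow> 'a \<Rightarrow> 'a set \<Rightarrow> real" where
  "MMJ d i j S = (if i = j then 0 else Min (max_jump d ` {p. is_path S i j p}))"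

end

(* A path from the new point x to j that is optimal in insert x S cannot return to x, so it
   is x followed either by the single jump to j or by a path inside S from its second point y.
   Its max jump is max (d x y) (max jump of the rest); minimising over the rest and then over y
   gives the formula. The single jump is the term y = j, as MMJ d j j S = 0 and d x j >= 0. *)
theory Submission
  imports Defs
begin

lemma max_jump_two: "max_jump d [a, b] = d a b"
  unfolding max_jump_def by simp

lemma max_jump_Cons:
  assumes "2 \<le> length p"
  shows "max_jump d (a # p) = max (d a (hd p)) (max_jump d p)"
proof -
  define J where "J q = (\<lambda>k. d (q ! k) (q ! Suc k)) ` {..<length q - 1}" for q :: "'a list"
  have max_jump_J: "max_jump d q = Max (J q)" for q
    unfolding max_jump_def J_def by (simp add: lessThan_atLeast0)
  have "{..<length p} = insert 0 (Suc ` {..<length p - 1})"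
    using assms lessThan_Suc_eq_insert_0[of "length p - 1"] by (cases p) auto
  then have "J (a # p) = insert (d a (hd p)) (J p)"
    using assms unfolding J_def by (cases p) (auto simp: image_image)
  moreover have "J p \<noteq> {}" "finite (J p)"
    using assms unfolding J_def by (auto simp: lessThan_empty_iff)
  ultimately show ?thesis
    by (simp add: max_jump_J)
qed

lemma is_path_length_le:
  assumes "finite S" "is_path S i j p"
  shows "length p \<le> Suc (card S)"
proof -
  have "set (tl p) \<subseteq> set p"
    by (cases p) auto
  then have "distinct (tl p)" "set (tl p) \<subseteq> S" "p \<noteq> []"
    using assms(2) unfolding is_path_def by (auto simp: distinct_tl)
  then have "length (tl p) \<le> card S"
    using card_mono[OF assms(1)] by (metis distinct_card)
  then show ?thesis by simp
qed

lemma finite_paths: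
  assumes "finite S"
  shows "finite {p. is_path S i j p}"
proof (rule finite_subset)
  show "{p. is_path S i j p} \<subseteq> {p. set p \<subseteq> S \<and> length p \<le> Suc (card S)}"
    using is_path_length_le[OF assms] unfolding is_path_def by blast
  show "finite {p. set p \<subseteq> S \<and> length p \<le> Suc (card S)}"
    using finite_lists_length_le[OF assms] .
qed

lemma MMJ_le_max_jump:
  assumes "finite S" "is_path S i j p" "i \<noteq> j"
  shows "MMJ d i j S \<le> max_jump d p"
  unfolding MMJ_def using assms finite_paths[OF assms(1), of i j]
  by (auto intro!: Min_le)

lemma MMJ_attained:
  assumes "finite S" "i \<in> S" "j \<in> S" "i \<noteq> j"
  obtains p where "is_path S i j p" "MMJ d i j S = max_jump d p"
proof -
  have "is_path S i j [i, j]"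
    using assms unfolding is_path_def by auto
  then have "max_jump d ` {p. is_path S i j p} \<noteq> {}" by blast
  from Min_in[OF finite_imageI[OF finite_paths[OF assms(1)]] this]
  show ?thesis
    using that assms(4) unfolding MMJ_def by auto
qed

lemma is_path_Cons:
  assumes "is_path S y j p" "y \<noteq> j" "x \<notin> S"
  shows "is_path (insert x S) x j (x # p)"
  using assms unfolding is_path_def by (cases p) auto

lemma is_path_insertE:
  assumes "is_path (insert x S) x j p" "x \<notin> S" "j \<in> S"
  obtains "p = [x, j]"
  | q where "p = x # q" "is_path S (hd q) j q" "hd q \<noteq> j"
proof -
  have "distinct p"
    using assms unfolding is_path_def by auto
  moreover obtain q where p: "p = x # q" "q \<noteq> []"
    using assms(1) unfolding is_path_def by (cases p) force+
  ultimately have q: "distinct q" "set q \<subseteq> S" "last q = j"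
    using assms(1) unfolding is_path_def by auto
  show ?thesis
  proof (cases "length q \<ge> 2")
    case True
    then obtain a q' where "q = a # q'" "q' \<noteq> []"
      by (cases q) (auto simp: Suc_le_eq)
    then have "hd q \<noteq> j"
      using q last_in_set[of q'] by auto
    moreover have "is_path S (hd q) j q"
      using True q unfolding is_path_def by auto
    ultimately show ?thesis
      using that(2) p by blast
  next
    case False
    then have "q = [j]"
      using p(2) q(3) by (cases q) (auto simp: Suc_le_eq)
    then show ?thesis
      using that(1) p by blast
  qed
qed

lemma MMJ_insert:
  assumes "finite S" "x \<notin> S" "j \<in> S" "0 \<le> d x j"
  shows "MMJ d x j (insert x S) = Min ((\<lambda>y. max (d x y) (MMJ d y j S)) ` S)"
    (is "?L = Min (?f ` S)")
proof (rule antisym)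
  have fin: "finite (insert x S)" and xj: "x \<noteq> j"
    using assms by auto
  show "?L \<le> Min (?f ` S)"
  proof (rule Min.boundedI)
    show "?f ` S \<noteq> {}" using assms(3) by blast
  next
    fix m assume "m \<in> ?f ` S"
    then obtain y where y: "y \<in> S" "m = ?f y" by blast
    show "?L \<le> m"
    proof (cases "y = j")
      case True
      have "is_path (insert x S) x j [x, j]"
        using assms(3) xj unfolding is_path_def by auto
      from MMJ_le_max_jump[OF fin this xj, of d] show ?thesis
        using y True by (simp add: max_jump_two le_max_iff_disj)
    next
      case False
      obtain p where p: "is_path S y j p" "MMJ d y j S = max_jump d p"
        using MMJ_attained[OF assms(1) y(1) assms(3) False] .
      have "?L \<le> max_jump d (x # p)"
        using MMJ_le_max_jump[OF fin is_path_Cons[OF p(1) False assms(2)] xj] .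
      also have "\<dots> = m"
        using p y unfolding is_path_def by (simp add: max_jump_Cons)
      finally show ?thesis .
    qed
  qed (simp add: assms(1))
next
  have "x \<in> insert x S" "j \<in> insert x S" "x \<noteq> j"
    using assms by auto
  then obtain p where p: "is_path (insert x S) x j p" "?L = max_jump d p"
    using MMJ_attained[OF finite.insertI[OF assms(1)]] by metis
  show "Min (?f ` S) \<le> ?L"
    using p(1) assms(2,3)
  proof (cases rule: is_path_insertE)
    case 1
    have "Min (?f ` S) \<le> ?f j"
      using assms(1,3) by simp
    then show ?thesis
      using p(2) 1 assms(4) by (simp add: MMJ_def max_jump_two)
  next
    case (2 q)
    have "hd q \<in> S"
      using 2 unfolding is_path_def by (cases q) auto
    then have "Min (?f ` S) \<le> ?f (hd q)"
      using assms(1) by simp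
    also have "\<dots> \<le> max (d x (hd q)) (max_jump d q)"
      using MMJ_le_max_jump[OF assms(1) 2(2,3)] by (intro max.mono order.refl)
    also have "\<dots> = ?L"
      using p(2) 2 unfolding is_path_def by (simp add: max_jump_Cons)
    finally show ?thesis .
  qed
qed

theorem theorem3p3:
  fixes \<Omega> :: "nat \<Rightarrow> 'a" and d :: "'a \<Rightarrow> 'a \<Rightarrow> real" and N n r :: nat
  assumes inj: "inj_on \<Omega> {1..N}"
    and d_nonneg: "\<And>x y. d x y \<ge> 0"
    and d_sym: "\<And>x y. d x y = d y x"
    and d_refl: "\<And>x. d x x = 0"
    and n_ge: "1 \<le> n" and n_lt: "n < N"
    and r_in: "r \<in> {1..n}"
  shows "MMJ d (\<Omega> (n+1)) (\<Omega> r) (\<Omega> ` {1..n+1}) =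
         Min ((\<lambda>t. max (d (\<Omega> (n+1)) (\<Omega> t)) (MMJ d (\<Omega> t) (\<Omega> r) (\<Omega> ` {1..n}))) ` {1..n})"
proof -
  have new_point: "\<Omega> (n+1) \<notin> \<Omega> ` {1..n}"
    using inj n_lt by (auto dest: inj_onD)
  have "\<Omega> ` {1..n+1} = insert (\<Omega> (n+1)) (\<Omega> ` {1..n})"
    by (simp add: atLeastAtMostSuc_conv)
  then show ?thesis
    using MMJ_insert[OF _ new_point _ d_nonneg] r_in by (simp add: image_image)
qed

end
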